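(* Finite memory winning strategies are not sufficient in interval mean-payoff games: there exists an interval mean-payoff game $(G,I)$ in which Eve has a winning strategy but has no winning strategy with finite memory.
   Context: A game graph is a tuple $G=(V,V_\exists,E,w,q_0)$ where $(V,E)$ is a finite directed graph in which every vertex has an outgoing edge, $w:E\to\mathbb{Z}$ is an integer edge-weight function, $V_\exists\subseteq V$ are Eve's vertices (the rest are Adam's), and $q_0\in V$ is the initial vertex. A play is an infinite path $\pi=v_0v_1\cdots$ with $v_0=q_0$; write $w(\pi[..k])=\sum_{i=0}^{k-1}w(v_i,v_{i+1})$. A strategy for a player maps finite play prefixes ending in one of that player's vertices to a successor vertex; it has finite memory if it can be realized as the output of a finite-state machine (with finitely many memory states) reading the play. The (liminf) mean-payoff of a play is $\underline{MP}(\pi)=\liminf_{k\to\infty}\frac1k w(\pi[..k])$. An interval mean-payoff game is a pair $(G,I)$ with $I$ a finite union of real intervals; a play is winning for Eve iff $\underline{MP}(\pi)\in I$, and winning for Adam otherwise. A strategy is winning for a player if all plays consistent with it are winning for that player. *)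

theory Defs
  imports "HOL-Analysis.Analysis"
begin

text \<open>Weights are integer-valued on edges
  (w is given as a function on pairs of vertices; only its values on E matter).\<close>
definition game_graph :: "'v set \<Rightarrow> 'v set \<Rightarrow> ('v \<times> 'v) set \<Rightarrow> 'v \<Rightarrow> bool" where
  "game_graph V VE E q0 \<longleftrightarrow> finite V \<and> E \<subseteq> V \<times> V \<and> (\<forall>v\<in>V. \<exists>u. (v, u) \<in> E)
      \<and> VE \<subseteq> V \<and> q0 \<in> V"

definition is_play :: "('v \<times> 'v) set \<Rightarrow> 'v \<Rightarrow> (nat \<Rightarrow> 'v) \<Rightarrow> bool" where
  "is_play E q0 \<pi> \<longleftrightarrow> \<pi> 0 = q0 \<and> (\<forall>i. (\<pi> i, \<pi> (Suc i)) \<in> E)"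

definition is_prefix :: "('v \<times> 'v) set \<Rightarrow> 'v \<Rightarrow> 'v list \<Rightarrow> bool" where
  "is_prefix E q0 h \<longleftrightarrow> h \<noteq> [] \<and> hd h = q0 \<and> (\<forall>i. Suc i < length h \<longrightarrow> (h ! i, h ! Suc i) \<in> E)"

definition eve_strategy :: "'v set \<Rightarrow> ('v \<times> 'v) set \<Rightarrow> 'v \<Rightarrow> ('v list \<Rightarrow> 'v) \<Rightarrow> bool" where
  "eve_strategy VE E q0 \<sigma> \<longleftrightarrow>
     (\<forall>h. is_prefix E q0 h \<and> last h \<in> VE \<longrightarrow> (last h, \<sigma> h) \<in> E)"

definition consistent_eve :: "'v set \<Rightarrow> ('v list \<Rightarrow> 'v) \<Rightarrow> (nat \<Rightarrow> 'v) \<Rightarrow> bool" where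
  "consistent_eve VE \<sigma> \<pi> \<longleftrightarrow> (\<forall>i. \<pi> i \<in> VE \<longrightarrow> \<pi> (Suc i) = \<sigma> (map \<pi> [0..<Suc i]))"

text \<open>Finite memory: the strategy is the output of a finite-state (Mealy) machine with memory
  states from a finite set M (encoded as naturals), initial state m0, update function upd
  reading the vertices of the play, and output function nxt.\<close>
definition finite_memory :: "'v set \<Rightarrow> 'v set \<Rightarrow> ('v \<times> 'v) set \<Rightarrow> 'v \<Rightarrow> ('v list \<Rightarrow> 'v) \<Rightarrow> bool" where
  "finite_memory V VE E q0 \<sigma> \<longleftrightarrow>
     (\<exists>(M :: nat set) m0 upd nxt. finite M \<and> m0 \<in> M \<and> (\<forall>m\<in>M. \<forall>v\<in>V. upd m v \<in> M) \<and>
        (\<forall>h. is_prefix E q0 h \<and> last h \<in> VE \<longrightarrow> \<sigma> h = nxt (foldl upd m0 h) (last h)))"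

definition path_weight :: "('v \<Rightarrow> 'v \<Rightarrow> int) \<Rightarrow> (nat \<Rightarrow> 'v) \<Rightarrow> nat \<Rightarrow> int" where
  "path_weight w \<pi> k = (\<Sum>i<k. w (\<pi> i) (\<pi> (Suc i)))"

definition mean_payoff :: "('v \<Rightarrow> 'v \<Rightarrow> int) \<Rightarrow> (nat \<Rightarrow> 'v) \<Rightarrow> ereal" where
  "mean_payoff w \<pi> = liminf (\<lambda>k. ereal (real_of_int (path_weight w \<pi> k) / real k))"

definition finite_interval_union :: "real set \<Rightarrow> bool" where
  "finite_interval_union I \<longleftrightarrow> (\<exists>F. finite F \<and> (\<forall>J\<in>F. is_interval J) \<and> I = \<Union>F)"

definition eve_wins_play :: "('v \<Rightarrow> 'v \<Rightarrow> int) \<Rightarrow> real set \<Rightarrow> (nat \<Rightarrow> 'v) \<Rightarrow> bool" where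
  "eve_wins_play w I \<pi> \<longleftrightarrow> (\<exists>r. mean_payoff w \<pi> = ereal r \<and> r \<in> I)"

definition winning_eve :: "'v set \<Rightarrow> ('v \<times> 'v) set \<Rightarrow> ('v \<Rightarrow> 'v \<Rightarrow> int) \<Rightarrow> 'v \<Rightarrow> real set
    \<Rightarrow> ('v list \<Rightarrow> 'v) \<Rightarrow> bool" where
  "winning_eve VE E w q0 I \<sigma> \<longleftrightarrow> eve_strategy VE E q0 \<sigma> \<and>
     (\<forall>\<pi>. is_play E q0 \<pi> \<and> consistent_eve VE \<sigma> \<pi> \<longrightarrow> eve_wins_play w I \<pi>)"

end

theory Submission
  imports Defs
begin

text \<open>Eve moves freely between two vertices, gaining 1 each time she enters vertex 1, and wants
  the mean-payoff to be exactly the irrational number \<open>\<surd>2 - 1\<close>. With unbounded memory she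
  can: entering 1 exactly when the average so far is below the target keeps the total weight
  within 1 of the target line. A finite-memory strategy in a one-player game produces a single
  play, which is driven by a finite-state system and hence eventually periodic; its mean-payoff
  is then the average weight of one period, a rational number.\<close>

lemma sqrt_2_not_rat: "sqrt 2 \<notin> \<rat>"
proof
  assume "sqrt 2 \<in> \<rat>"
  then obtain m n :: nat where "n \<noteq> 0" and "\<bar>sqrt 2\<bar> = m / n" and "coprime m n"
    by (rule Rats_abs_nat_div_natE)
  then have "real m = sqrt 2 * n" by simp
  then have "real (m\<^sup>2) = real (2 * n\<^sup>2)" by (simp add: power_mult_distrib)
  then have m2: "m\<^sup>2 = 2 * n\<^sup>2" by (simp only: of_nat_eq_iff)
  then have "even (m\<^sup>2)" by simp
  then have "even m" by (simp add: even_power)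
  then obtain k where "m = 2 * k" ..
  with m2 have "n\<^sup>2 = 2 * k\<^sup>2" by (simp add: power2_eq_square)
  then have "even (n\<^sup>2)" by simp
  then have "even n" by (simp add: even_power)
  with \<open>even m\<close> show False
    using coprime_common_divisor[OF \<open>coprime m n\<close>, of 2] by simp
qed

lemma LIMSEQ_divide_of_bounded_deviation:
  fixes x :: "nat \<Rightarrow> real"
  assumes "\<And>k. \<bar>x k - c * real k\<bar> \<le> B"
  shows "(\<lambda>k. x k / real k) \<longlonglongrightarrow> c"
proof -
  have "(\<lambda>k. x k / real k - c) \<longlonglongrightarrow> 0"
  proof (rule Lim_null_comparison)
    show "eventually (\<lambda>k. norm (x k / real k - c) \<le> B / real k) sequentially"
      using eventually_gt_at_top[of 0]
    proof eventually_elim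
      case (elim k)
      then have "x k / real k - c = (x k - c * real k) / real k" by (simp add: field_simps)
      then show ?case using assms[of k] elim by (simp add: abs_divide divide_right_mono)
    qed
    show "(\<lambda>k. B / real k) \<longlonglongrightarrow> 0" by (rule lim_const_over_n)
  qed
  then show ?thesis by (simp add: LIM_zero_iff)
qed

lemma mean_payoff_eq_of_bounded_deviation:
  assumes "\<And>k. \<bar>real_of_int (path_weight w \<pi> k) - c * real k\<bar> \<le> B"
  shows "mean_payoff w \<pi> = ereal c"
  unfolding mean_payoff_def
  by (rule lim_imp_Liminf) (use LIMSEQ_divide_of_bounded_deviation[OF assms] in simp_all)

lemma eventually_periodic_range:
  fixes f :: "nat \<Rightarrow> 'a"
  assumes "p > 0" and periodic: "\<And>k. k \<ge> i \<Longrightarrow> f (k + p) = f k"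
  shows "range f = f ` {..<i + p}"
proof -
  have "f k \<in> f ` {..<i + p}" for k
  proof (induction k rule: less_induct)
    case (less k)
    show ?case
    proof (cases "k < i + p")
      case False
      then have "f k = f (k - p)" using periodic[of "k - p"] by simp
      then show ?thesis using less[of "k - p"] False \<open>p > 0\<close> by simp
    qed simp
  qed
  then show ?thesis by blast
qed

lemma orbit_eventually_periodic:
  assumes "\<And>n. s (Suc n) = F (s n)" and "finite (range s)"
  shows "\<exists>i p. p > 0 \<and> (\<forall>k\<ge>i. s (k + p) = s k)"
proof -
  obtain a b where "a < b" and same: "s a = s b"
    using \<open>finite (range s)\<close> finite_imageD[of s UNIV] infinite_UNIV_nat
    by (metis inj_def linorder_neqE_nat)
  have "s (k + (b - a)) = s k" if "k \<ge> a" for k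
    using that
  proof (induction k rule: dec_induct)
    case base then show ?case using same \<open>a < b\<close> by simp
  next
    case (step k) then show ?case using assms(1) by (metis add_Suc)
  qed
  with \<open>a < b\<close> show ?thesis by (metis zero_less_diff)
qed

text \<open>The deviation of the partial sums from the line of slope \<open>c\<close> is itself eventually
  periodic, hence takes only finitely many values.\<close>
lemma partial_sums_bounded_deviation_if_eventually_periodic:
  fixes d :: "nat \<Rightarrow> real"
  assumes "p > 0" and periodic: "\<And>k. k \<ge> i \<Longrightarrow> d (k + p) = d k"
  defines "c \<equiv> (\<Sum>t\<in>{i..<i + p}. d t) / p"
  shows "\<exists>B. \<forall>k. \<bar>(\<Sum>t<k. d t) - c * real k\<bar> \<le> B"
proof -
  define g where "g k = (\<Sum>t<k. d t) - c * real k" for k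
  have "g (k + p) = g k" if "k \<ge> i" for k
    using that
  proof (induction k rule: dec_induct)
    case base
    have "(\<Sum>t<i + p. d t) = (\<Sum>t<i. d t) + (\<Sum>t\<in>{i..<i + p}. d t)"
      by (simp add: lessThan_atLeast0 sum.atLeastLessThan_concat)
    then show ?case using \<open>p > 0\<close> by (simp add: g_def c_def field_simps)
  next
    case (step k)
    then show ?case using periodic[of k] by (simp add: g_def algebra_simps)
  qed
  then have "range g = g ` {..<i + p}" by (rule eventually_periodic_range[OF \<open>p > 0\<close>])
  then have "g k \<in> g ` {..<i + p}" for k by blast
  then have "\<bar>g k\<bar> \<le> Max (abs ` g ` {..<i + p})" for k by (intro Max_ge) auto
  then show ?thesis unfolding g_def by blast
qed

lemma mean_payoff_rational_if_eventually_periodic: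
  assumes "p > 0" and "\<And>k. k \<ge> i \<Longrightarrow> \<pi> (k + p) = \<pi> k"
  shows "\<exists>c\<in>\<rat>. mean_payoff w \<pi> = ereal c"
proof -
  define d where "d t = real_of_int (w (\<pi> t) (\<pi> (Suc t)))" for t
  have "d (k + p) = d k" if "k \<ge> i" for k
    using assms(2)[of k] assms(2)[of "Suc k"] that by (simp add: d_def)
  then obtain B where "\<forall>k. \<bar>(\<Sum>t<k. d t) - (\<Sum>t\<in>{i..<i + p}. d t) / p * real k\<bar> \<le> B"
    using partial_sums_bounded_deviation_if_eventually_periodic[OF \<open>p > 0\<close>] by blast
  then have "mean_payoff w \<pi> = ereal ((\<Sum>t\<in>{i..<i + p}. d t) / p)"
    by (intro mean_payoff_eq_of_bounded_deviation[of _ _ _ B]) (simp add: path_weight_def d_def)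
  moreover have "(\<Sum>t\<in>{i..<i + p}. d t) / p \<in> \<rat>"
    by (simp add: d_def Rats_sum)
  ultimately show ?thesis by blast
qed

fun outcome_prefix :: "('v list \<Rightarrow> 'v) \<Rightarrow> 'v \<Rightarrow> nat \<Rightarrow> 'v list" where
  "outcome_prefix \<sigma> q0 0 = [q0]"
| "outcome_prefix \<sigma> q0 (Suc n) = outcome_prefix \<sigma> q0 n @ [\<sigma> (outcome_prefix \<sigma> q0 n)]"

text \<open>The play produced by \<open>\<sigma>\<close> when Eve owns every vertex.\<close>
definition outcome :: "('v list \<Rightarrow> 'v) \<Rightarrow> 'v \<Rightarrow> nat \<Rightarrow> 'v" where
  "outcome \<sigma> q0 n = last (outcome_prefix \<sigma> q0 n)"

lemma outcome_prefix_eq_map: "outcome_prefix \<sigma> q0 n = map (outcome \<sigma> q0) [0..<Suc n]"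
proof (induction n)
  case (Suc n)
  have "outcome_prefix \<sigma> q0 (Suc n) = outcome_prefix \<sigma> q0 n @ [outcome \<sigma> q0 (Suc n)]"
    by (simp add: outcome_def)
  then show ?case by (simp only: Suc.IH map_append list.map upt_Suc_append zero_le)
qed (simp add: outcome_def)

lemma outcome_0 [simp]: "outcome \<sigma> q0 0 = q0"
  by (simp add: outcome_def)

lemma outcome_Suc: "outcome \<sigma> q0 (Suc n) = \<sigma> (map (outcome \<sigma> q0) [0..<Suc n])"
  unfolding outcome_prefix_eq_map[symmetric] by (simp add: outcome_def)

lemma consistent_eve_outcome: "consistent_eve VE \<sigma> (outcome \<sigma> q0)"
  by (simp add: consistent_eve_def outcome_Suc del: upt_Suc)

lemma is_prefix_map_upt_iff:
  "is_prefix E q0 (map \<pi> [0..<Suc n]) \<longleftrightarrow> \<pi> 0 = q0 \<and> (\<forall>i<n. (\<pi> i, \<pi> (Suc i)) \<in> E)"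
  unfolding is_prefix_def by (simp add: hd_map del: upt_Suc)

lemma is_play_outcome:
  assumes "E \<subseteq> V \<times> V" "q0 \<in> V" "eve_strategy V E q0 \<sigma>"
  shows "is_play E q0 (outcome \<sigma> q0)"
proof -
  let ?\<pi> = "outcome \<sigma> q0"
  have "(?\<pi> n, ?\<pi> (Suc n)) \<in> E \<and> ?\<pi> (Suc n) \<in> V" for n
  proof (induction n rule: less_induct)
    case (less n)
    then have "is_prefix E q0 (map ?\<pi> [0..<Suc n])"
      by (simp add: is_prefix_map_upt_iff del: upt_Suc)
    moreover have "?\<pi> n \<in> V"
      using less[of "n - 1"] \<open>q0 \<in> V\<close> by (cases n) auto
    moreover have "last (map ?\<pi> [0..<Suc n]) = ?\<pi> n" by simp
    ultimately have "(?\<pi> n, ?\<pi> (Suc n)) \<in> E"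
      using \<open>eve_strategy V E q0 \<sigma>\<close> unfolding eve_strategy_def outcome_Suc by metis
    with \<open>E \<subseteq> V \<times> V\<close> show ?case by blast
  qed
  then show ?thesis by (simp add: is_play_def)
qed

lemma eventually_periodic_outcome_if_finite_memory:
  assumes "game_graph V V E q0" "eve_strategy V E q0 \<sigma>" "finite_memory V V E q0 \<sigma>"
  shows "\<exists>i p. p > 0 \<and> (\<forall>k\<ge>i. outcome \<sigma> q0 (k + p) = outcome \<sigma> q0 k)"
proof -
  obtain M m0 upd nxt where "finite (M :: nat set)" "m0 \<in> M" and upd: "\<forall>m\<in>M. \<forall>v\<in>V. upd m v \<in> M"
    and nxt: "\<forall>h. is_prefix E q0 h \<and> last h \<in> V \<longrightarrow> \<sigma> h = nxt (foldl upd m0 h) (last h)"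
    using assms(3) unfolding finite_memory_def by blast
  let ?\<pi> = "outcome \<sigma> q0"
  have play: "is_play E q0 ?\<pi>"
    using assms(1,2) by (intro is_play_outcome) (auto simp: game_graph_def)
  have in_V: "?\<pi> n \<in> V" for n
    using play assms(1) by (cases n) (auto simp: is_play_def game_graph_def)
  define mem where "mem n = foldl upd m0 (map ?\<pi> [0..<Suc n])" for n
  have mem_M: "mem n \<in> M" for n
    using in_V[of 0] by (induction n) (simp_all add: mem_def upd \<open>m0 \<in> M\<close> in_V)
  have "?\<pi> (Suc n) = nxt (mem n) (?\<pi> n)" for n
  proof -
    have "is_prefix E q0 (map ?\<pi> [0..<Suc n])"
      using play by (simp add: is_prefix_map_upt_iff is_play_def del: upt_Suc)
    moreover have "last (map ?\<pi> [0..<Suc n]) = ?\<pi> n" by simp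
    ultimately show ?thesis using nxt in_V[of n] unfolding mem_def outcome_Suc by metis
  qed
  then have "(mem (Suc n), ?\<pi> (Suc n)) = (\<lambda>(m, v). (upd m (nxt m v), nxt m v)) (mem n, ?\<pi> n)"
    for n by (simp add: mem_def)
  moreover have "finite (range (\<lambda>n. (mem n, ?\<pi> n)))"
    using mem_M in_V \<open>finite M\<close> assms(1) unfolding game_graph_def
    by (auto intro: finite_subset[of _ "M \<times> V"])
  ultimately obtain i p where "p > 0" "\<forall>k\<ge>i. (mem (k + p), ?\<pi> (k + p)) = (mem k, ?\<pi> k)"
    using orbit_eventually_periodic[of "\<lambda>n. (mem n, ?\<pi> n)"] by blast
  then show ?thesis by blast
qed

lemma rational_in_interval_if_finite_memory_winning:
  assumes "game_graph V V E q0" "finite_memory V V E q0 \<sigma>" "winning_eve V E w q0 I \<sigma>"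
  shows "I \<inter> \<rat> \<noteq> {}"
proof -
  let ?\<pi> = "outcome \<sigma> q0"
  have strategy: "eve_strategy V E q0 \<sigma>" using assms(3) by (simp add: winning_eve_def)
  obtain i p where "p > 0" "\<And>k. k \<ge> i \<Longrightarrow> ?\<pi> (k + p) = ?\<pi> k"
    using eventually_periodic_outcome_if_finite_memory[OF assms(1) strategy assms(2)] by blast
  then obtain c where "c \<in> \<rat>" and c: "mean_payoff w ?\<pi> = ereal c"
    using mean_payoff_rational_if_eventually_periodic by metis
  have "is_play E q0 ?\<pi>"
    using assms(1) strategy by (intro is_play_outcome) (auto simp: game_graph_def)
  then have "eve_wins_play w I ?\<pi>"
    using assms(3) consistent_eve_outcome[of V \<sigma> q0] by (simp add: winning_eve_def)
  with c \<open>c \<in> \<rat>\<close> show ?thesis by (auto simp: eve_wins_play_def)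
qed

definition V01 :: "nat set" where
  "V01 = {0, 1}"

definition w01 :: "nat \<Rightarrow> nat \<Rightarrow> int" where
  "w01 u v = (if v = 1 then 1 else 0)"

definition greedy :: "real \<Rightarrow> nat list \<Rightarrow> nat" where
  "greedy a h = (let k = length h - 1 in
     if real_of_int (path_weight w01 ((!) h) k) < a * real k then 1 else 0)"

lemma path_weight_map_upt: "path_weight w ((!) (map \<pi> [0..<Suc k])) k = path_weight w \<pi> k"
  unfolding path_weight_def by (rule sum.cong) (simp_all del: upt_Suc)

lemma winning_eve_greedy:
  assumes "0 \<le> a" "a \<le> 1"
  shows "winning_eve V01 (V01 \<times> V01) w01 0 {a} (greedy a)"
  unfolding winning_eve_def
proof (intro conjI allI impI)
  show "eve_strategy V01 (V01 \<times> V01) 0 (greedy a)"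
    unfolding eve_strategy_def greedy_def V01_def by (auto simp: Let_def)
  fix \<pi> assume "is_play (V01 \<times> V01) 0 \<pi> \<and> consistent_eve V01 (greedy a) \<pi>"
  then have "\<pi> (Suc k) = greedy a (map \<pi> [0..<Suc k])" for k
    unfolding is_play_def consistent_eve_def by blast
  then have move: "\<pi> (Suc k) = (if real_of_int (path_weight w01 \<pi> k) < a * real k then 1 else 0)"
    for k by (simp only: greedy_def Let_def length_map length_upt diff_Suc_1 diff_zero path_weight_map_upt)
  have "\<bar>real_of_int (path_weight w01 \<pi> k) - a * real k\<bar> \<le> 1" for k
  proof (induction k)
    case (Suc k)
    then show ?case
      using move[of k] assms by (auto simp: path_weight_def w01_def algebra_simps)
  qed (simp add: path_weight_def)
  then have "mean_payoff w01 \<pi> = ereal a" by (rule mean_payoff_eq_of_bounded_deviation)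
  then show "eve_wins_play w01 {a} \<pi>" by (simp add: eve_wins_play_def)
qed

theorem mainTheorem3:
  shows "\<exists>(V :: nat set) VE E w q0 I.
     game_graph V VE E q0 \<and> finite_interval_union I \<and>
     (\<exists>\<sigma>. winning_eve VE E w q0 I \<sigma>) \<and>
     \<not> (\<exists>\<sigma>. finite_memory V VE E q0 \<sigma> \<and> winning_eve VE E w q0 I \<sigma>)"
proof -
  define \<alpha> where "\<alpha> = sqrt 2 - 1"
  have "0 \<le> \<alpha>" "\<alpha> \<le> 1"
    by (simp_all add: \<alpha>_def real_le_lsqrt)
  have "\<alpha> \<notin> \<rat>"
    using sqrt_2_not_rat Rats_add[OF _ Rats_1, of \<alpha>] by (auto simp: \<alpha>_def)
  have game: "game_graph V01 V01 (V01 \<times> V01) 0"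
    by (auto simp: game_graph_def V01_def)
  moreover have "finite_interval_union {\<alpha>}"
    unfolding finite_interval_union_def by (intro exI[of _ "{{\<alpha>}}"]) (simp add: is_interval_convex_1)
  moreover have "winning_eve V01 (V01 \<times> V01) w01 0 {\<alpha>} (greedy \<alpha>)"
    using \<open>0 \<le> \<alpha>\<close> \<open>\<alpha> \<le> 1\<close> by (rule winning_eve_greedy)
  moreover have "\<not> (\<exists>\<sigma>. finite_memory V01 V01 (V01 \<times> V01) 0 \<sigma>
      \<and> winning_eve V01 (V01 \<times> V01) w01 0 {\<alpha>} \<sigma>)"
    using rational_in_interval_if_finite_memory_winning[OF game] \<open>\<alpha> \<notin> \<rat>\<close> by blast
  ultimately show ?thesis by blast
qed

end
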